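(* Fix $n\ge2$ and a value $W$ of the fuzzy size. Among all fuzzy graphs $\Gamma$ on $n$ vertices with $\mathrm{ew}(\Gamma)=W$, the ones maximizing $\sigma^*(\Gamma)$ are precisely the fuzzy single-edge graphs: those consisting of one fuzzy edge of membership $W$ and $n-2$ isolated vertices (all other edge memberships zero).
   Context: A fuzzy graph $\Gamma=(V,\nu,\mu)$ consists of a finite vertex set $V$ with $|V|=n$, a map $\nu:V\to[0,1]$, and a symmetric map $\mu:V\times V\to[0,1]$ with $\mu(u,v)\le\min(\nu(u),\nu(v))$. The fuzzy degree is $d_\Gamma(v)=\sum_{u\ne v}\mu(v,u)$, the fuzzy size is $\mathrm{ew}(\Gamma)=\sum_{\{u,v\},u\ne v}\mu(u,v)$, $\lambda=2\,\mathrm{ew}(\Gamma)/n$, and the fuzzy sigma index is $\sigma^*(\Gamma)=\frac1n\sum_{v}(d_\Gamma(v)-\lambda)^2$. *)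

theory Defs
  imports Complex_Main
begin

definition fuzzy_graph :: "'a set \<Rightarrow> ('a \<Rightarrow> real) \<Rightarrow> ('a \<Rightarrow> 'a \<Rightarrow> real) \<Rightarrow> bool" where
  "fuzzy_graph V \<nu> \<mu> \<longleftrightarrow>
     (\<forall>v\<in>V. 0 \<le> \<nu> v \<and> \<nu> v \<le> 1) \<and>
     (\<forall>u\<in>V. \<forall>v\<in>V. 0 \<le> \<mu> u v \<and> \<mu> u v \<le> 1 \<and> \<mu> u v = \<mu> v u \<and>
        \<mu> u v \<le> min (\<nu> u) (\<nu> v))"

definition fdeg :: "'a set \<Rightarrow> ('a \<Rightarrow> 'a \<Rightarrow> real) \<Rightarrow> 'a \<Rightarrow> real" where
  "fdeg V \<mu> v = (\<Sum>u\<in>V - {v}. \<mu> v u)"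

text \<open>Fuzzy size: sum over unordered pairs {u,v}, u \<noteq> v, of mu u v.  Since mu is
  symmetric this is half the sum over ordered pairs of distinct vertices.\<close>
definition fsize :: "'a set \<Rightarrow> ('a \<Rightarrow> 'a \<Rightarrow> real) \<Rightarrow> real" where
  "fsize V \<mu> = (\<Sum>u\<in>V. \<Sum>v\<in>V - {u}. \<mu> u v) / 2"

definition flambda :: "'a set \<Rightarrow> ('a \<Rightarrow> 'a \<Rightarrow> real) \<Rightarrow> real" where
  "flambda V \<mu> = 2 * fsize V \<mu> / real (card V)"

definition fsigma :: "'a set \<Rightarrow> ('a \<Rightarrow> 'a \<Rightarrow> real) \<Rightarrow> real" where
  "fsigma V \<mu> = (\<Sum>v\<in>V. (fdeg V \<mu> v - flambda V \<mu>)\<^sup>2) / real (card V)"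

definition single_edge :: "'a set \<Rightarrow> ('a \<Rightarrow> 'a \<Rightarrow> real) \<Rightarrow> real \<Rightarrow> bool" where
  "single_edge V \<mu> W \<longleftrightarrow>
     (\<exists>a\<in>V. \<exists>b\<in>V. a \<noteq> b \<and> \<mu> a b = W \<and>
        (\<forall>u\<in>V. \<forall>v\<in>V. u \<noteq> v \<and> {u, v} \<noteq> {a, b} \<longrightarrow> \<mu> u v = 0))"

end

theory Submission
  imports Defs
begin

text \<open>
  Write Q = \<Sum>v. d(v)^2 and W = ew(\<Gamma>). Since \<Sum>v. d(v) = 2W, the variance formula gives
  \<sigma>*(\<Gamma>) = Q/n - 4W^2/n^2, so for fixed W maximising \<sigma>* means maximising Q.
  Every degree satisfies 0 \<le> d(v) \<le> W, because the edges at v are among all edges;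
  hence Q \<le> W \<Sum>v. d(v) = 2W^2. Equality forces every degree to be 0 or W, so
  (for W > 0) exactly two vertices have positive degree, and all of W sits on the edge
  between them. A single edge of membership W attains Q = 2W^2.
\<close>

definition weighted_graph :: "'a set \<Rightarrow> ('a \<Rightarrow> 'a \<Rightarrow> real) \<Rightarrow> bool" where
  "weighted_graph V \<mu> \<longleftrightarrow> (\<forall>u\<in>V. \<forall>v\<in>V. 0 \<le> \<mu> u v \<and> \<mu> u v = \<mu> v u)"

lemma fuzzy_graph_imp_weighted_graph: "fuzzy_graph V \<nu> \<mu> \<Longrightarrow> weighted_graph V \<mu>"
  unfolding fuzzy_graph_def weighted_graph_def by blast

lemma sum_fdeg: "(\<Sum>v\<in>V. fdeg V \<mu> v) = 2 * fsize V \<mu>"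
  unfolding fdeg_def fsize_def by simp

lemma fdeg_nonneg: "weighted_graph V \<mu> \<Longrightarrow> v \<in> V \<Longrightarrow> 0 \<le> fdeg V \<mu> v"
  unfolding fdeg_def weighted_graph_def by (auto intro!: sum_nonneg)

lemma edge_le_fdeg:
  "finite V \<Longrightarrow> weighted_graph V \<mu> \<Longrightarrow> u \<in> V \<Longrightarrow> v \<in> V \<Longrightarrow> u \<noteq> v \<Longrightarrow> \<mu> u v \<le> fdeg V \<mu> u"
  unfolding fdeg_def weighted_graph_def by (rule member_le_sum) auto

lemma fdeg_le_fsize:
  assumes "finite V" "weighted_graph V \<mu>" "v \<in> V"
  shows "fdeg V \<mu> v \<le> fsize V \<mu>"
proof -
  have "fdeg V \<mu> v = (\<Sum>u\<in>V-{v}. \<mu> u v)"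
    using assms(2,3) unfolding fdeg_def weighted_graph_def by (intro sum.cong) auto
  also have "\<dots> \<le> (\<Sum>u\<in>V-{v}. fdeg V \<mu> u)"
    using assms by (intro sum_mono edge_le_fdeg) auto
  finally have "2 * fdeg V \<mu> v \<le> (\<Sum>u\<in>V. fdeg V \<mu> u)"
    using assms by (simp add: sum.remove)
  then show ?thesis
    by (simp add: sum_fdeg)
qed

lemma sum_fdeg_squared_le:
  assumes "finite V" "weighted_graph V \<mu>"
  shows "(\<Sum>v\<in>V. (fdeg V \<mu> v)\<^sup>2) \<le> 2 * (fsize V \<mu>)\<^sup>2"
proof -
  have "(\<Sum>v\<in>V. (fdeg V \<mu> v)\<^sup>2) \<le> (\<Sum>v\<in>V. fdeg V \<mu> v * fsize V \<mu>)"
    using assms unfolding power2_eq_square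
    by (intro sum_mono mult_left_mono fdeg_le_fsize fdeg_nonneg)
  also have "\<dots> = 2 * (fsize V \<mu>)\<^sup>2"
    by (simp add: sum_distrib_right[symmetric] sum_fdeg power2_eq_square)
  finally show ?thesis .
qed

lemma fdeg_eq_0_or_fsize:
  assumes "finite V" "weighted_graph V \<mu>" "v \<in> V"
    and eq: "(\<Sum>v\<in>V. (fdeg V \<mu> v)\<^sup>2) = 2 * (fsize V \<mu>)\<^sup>2"
  shows "fdeg V \<mu> v = 0 \<or> fdeg V \<mu> v = fsize V \<mu>"
proof -
  define d W where "d = fdeg V \<mu>" and "W = fsize V \<mu>"
  have "(\<Sum>u\<in>V. d u * (W - d u)) = W * (\<Sum>u\<in>V. d u) - (\<Sum>u\<in>V. (d u)\<^sup>2)"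
    by (simp add: algebra_simps sum_subtractf sum_distrib_left power2_eq_square)
  also have "\<dots> = 0"
    using eq unfolding d_def W_def by (simp add: sum_fdeg power2_eq_square)
  finally have "(\<Sum>u\<in>V. d u * (W - d u)) = 0" .
  moreover have "\<forall>u\<in>V. 0 \<le> d u * (W - d u)"
    unfolding d_def W_def using assms(1,2) by (simp add: fdeg_nonneg fdeg_le_fsize)
  ultimately have "d v * (W - d v) = 0"
    using assms(1,3) sum_nonneg_eq_0_iff[of V "\<lambda>u. d u * (W - d u)"] by simp
  then show ?thesis
    unfolding d_def W_def by auto
qed

lemma sum_fdeg_squared_eq_imp_fdeg_support:
  assumes "finite V" "weighted_graph V \<mu>" "2 \<le> card V"
    and eq: "(\<Sum>v\<in>V. (fdeg V \<mu> v)\<^sup>2) = 2 * (fsize V \<mu>)\<^sup>2"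
  obtains a b where "a \<in> V" "b \<in> V" "a \<noteq> b" "\<forall>v\<in>V. fdeg V \<mu> v \<noteq> 0 \<longrightarrow> v \<in> {a, b}"
proof (cases "fsize V \<mu> = 0")
  case True
  obtain a b where "a \<in> V" "b \<in> V" "a \<noteq> b"
    using assms(1,3) card_le_Suc0_iff_eq[of V] by force
  moreover have "\<forall>v\<in>V. fdeg V \<mu> v = 0"
    using fdeg_eq_0_or_fsize[OF assms(1,2) _ eq] True by auto
  ultimately show ?thesis
    using that by blast
next
  case False
  define S where "S = {v\<in>V. fdeg V \<mu> v = fsize V \<mu>}"
  have "2 * fsize V \<mu> = (\<Sum>v\<in>V. if fdeg V \<mu> v = fsize V \<mu> then fsize V \<mu> else 0)"
    unfolding sum_fdeg[symmetric] using fdeg_eq_0_or_fsize[OF assms(1,2) _ eq]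
    by (intro sum.cong) auto
  also have "\<dots> = card S * fsize V \<mu>"
    unfolding S_def using assms(1) by (simp add: sum.inter_filter[symmetric])
  finally have "card S = 2"
    using False by simp
  then obtain a b where "S = {a, b}" "a \<noteq> b"
    by (auto simp: card_2_iff)
  moreover have "\<forall>v\<in>V. fdeg V \<mu> v \<noteq> 0 \<longrightarrow> v \<in> S"
    unfolding S_def using fdeg_eq_0_or_fsize[OF assms(1,2) _ eq] by blast
  ultimately show ?thesis
    using that unfolding S_def by blast
qed

lemma fdeg_single_edge:
  assumes "finite V" "weighted_graph V \<mu>" "a \<in> V" "b \<in> V" "a \<noteq> b" "v \<in> V"
    and off: "\<And>u w. u \<in> V \<Longrightarrow> w \<in> V \<Longrightarrow> u \<noteq> w \<Longrightarrow> {u, w} \<noteq> {a, b} \<Longrightarrow> \<mu> u w = 0"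
  shows "fdeg V \<mu> v = (if v \<in> {a, b} then \<mu> a b else 0)"
proof (cases "v \<in> {a, b}")
  case True
  define w where "w = (if v = a then b else a)"
  have w: "w \<in> V - {v}" "\<mu> v w = \<mu> a b"
    using True assms(2-5) unfolding w_def weighted_graph_def by auto
  have "fdeg V \<mu> v = (\<Sum>u\<in>V-{v}. if u = w then \<mu> a b else 0)"
    unfolding fdeg_def
  proof (intro sum.cong refl)
    fix u assume "u \<in> V - {v}"
    then have u: "u \<in> V" "v \<noteq> u"
      by auto
    show "\<mu> v u = (if u = w then \<mu> a b else 0)"
    proof (cases "u = w")
      case False
      then have "{v, u} \<noteq> {a, b}"
        using True assms(5) unfolding w_def by (auto simp: doubleton_eq_iff)
      then have "\<mu> v u = 0"
        using off[OF assms(6) u] by simp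
      then show ?thesis
        using False by simp
    qed (use w in simp)
  qed
  also have "\<dots> = \<mu> a b"
    using assms(1) w(1) by simp
  finally show ?thesis
    using True by simp
next
  case False
  have "\<mu> v u = 0" if "u \<in> V - {v}" for u
  proof -
    have "{v, u} \<noteq> {a, b}"
      using False by auto
    moreover have "u \<in> V" "v \<noteq> u"
      using that by auto
    ultimately show ?thesis
      using off[OF assms(6)] by simp
  qed
  then show ?thesis
    using False unfolding fdeg_def by simp
qed

lemma sum_if_doubleton:
  assumes "finite V" "a \<in> V" "b \<in> V" "a \<noteq> b"
  shows "(\<Sum>v\<in>V. if v \<in> {a, b} then c else 0) = 2 * (c :: real)"
proof -
  have "(\<Sum>v\<in>V. if v \<in> {a, b} then c else 0) = (\<Sum>v\<in>{v\<in>V. v \<in> {a, b}}. c)"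
    using assms(1) by (rule sum.inter_filter[symmetric])
  also have "{v\<in>V. v \<in> {a, b}} = {a, b}"
    using assms(2,3) by blast
  finally show ?thesis
    using assms(4) by simp
qed

lemma single_edge_imp_sum_fdeg_squared:
  assumes "finite V" "weighted_graph V \<mu>" "single_edge V \<mu> W"
  shows "fsize V \<mu> = W" and "(\<Sum>v\<in>V. (fdeg V \<mu> v)\<^sup>2) = 2 * W\<^sup>2"
proof -
  obtain a b where ab: "a \<in> V" "b \<in> V" "a \<noteq> b" "\<mu> a b = W"
    and off: "\<forall>u\<in>V. \<forall>w\<in>V. u \<noteq> w \<and> {u, w} \<noteq> {a, b} \<longrightarrow> \<mu> u w = 0"
    using assms(3) unfolding single_edge_def by blast
  note deg = fdeg_single_edge[OF assms(1,2) ab(1-3) _ off[rule_format]]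
  have "2 * fsize V \<mu> = (\<Sum>v\<in>V. if v \<in> {a, b} then W else 0)"
    unfolding sum_fdeg[symmetric] using deg ab(4) by (intro sum.cong) auto
  then show "fsize V \<mu> = W"
    using sum_if_doubleton[OF assms(1) ab(1-3)] by simp
  have "(\<Sum>v\<in>V. (fdeg V \<mu> v)\<^sup>2) = (\<Sum>v\<in>V. if v \<in> {a, b} then W\<^sup>2 else 0)"
    using deg ab(4) by (intro sum.cong) auto
  then show "(\<Sum>v\<in>V. (fdeg V \<mu> v)\<^sup>2) = 2 * W\<^sup>2"
    using sum_if_doubleton[OF assms(1) ab(1-3)] by simp
qed

lemma sum_fdeg_squared_eq_iff_single_edge:
  assumes "finite V" "weighted_graph V \<mu>" "2 \<le> card V"
  shows "(\<Sum>v\<in>V. (fdeg V \<mu> v)\<^sup>2) = 2 * (fsize V \<mu>)\<^sup>2 \<longleftrightarrow> single_edge V \<mu> (fsize V \<mu>)"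
proof
  assume eq: "(\<Sum>v\<in>V. (fdeg V \<mu> v)\<^sup>2) = 2 * (fsize V \<mu>)\<^sup>2"
  obtain a b where ab: "a \<in> V" "b \<in> V" "a \<noteq> b"
    and support: "\<forall>v\<in>V. fdeg V \<mu> v \<noteq> 0 \<longrightarrow> v \<in> {a, b}"
    using sum_fdeg_squared_eq_imp_fdeg_support[OF assms eq] by blast
  have off: "\<mu> u w = 0" if uw: "u \<in> V" "w \<in> V" "u \<noteq> w" "{u, w} \<noteq> {a, b}" for u w
  proof -
    have "u \<notin> {a, b} \<or> w \<notin> {a, b}"
      using uw(3,4) by (auto simp: doubleton_eq_iff)
    then have "fdeg V \<mu> u = 0 \<or> fdeg V \<mu> w = 0"
      using support uw(1,2) by blast
    moreover have "\<mu> u w \<le> fdeg V \<mu> u" "\<mu> w u \<le> fdeg V \<mu> w"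
      using edge_le_fdeg[OF assms(1,2)] uw(1-3) by auto
    moreover have "0 \<le> \<mu> u w" "\<mu> w u = \<mu> u w"
      using uw(1,2) assms(2) unfolding weighted_graph_def by simp_all
    ultimately show ?thesis
      by linarith
  qed
  then have "single_edge V \<mu> (\<mu> a b)"
    unfolding single_edge_def using ab by blast
  moreover have "fsize V \<mu> = \<mu> a b"
    using single_edge_imp_sum_fdeg_squared(1)[OF assms(1,2) calculation] .
  ultimately show "single_edge V \<mu> (fsize V \<mu>)"
    by simp
next
  assume "single_edge V \<mu> (fsize V \<mu>)"
  then show "(\<Sum>v\<in>V. (fdeg V \<mu> v)\<^sup>2) = 2 * (fsize V \<mu>)\<^sup>2"
    by (rule single_edge_imp_sum_fdeg_squared(2)[OF assms(1,2)])
qed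

lemma fsigma_eq:
  assumes "finite V" "V \<noteq> {}"
  shows "fsigma V \<mu> = ((\<Sum>v\<in>V. (fdeg V \<mu> v)\<^sup>2) - 4 * (fsize V \<mu>)\<^sup>2 / card V) / card V"
proof -
  let ?d = "fdeg V \<mu>" and ?l = "flambda V \<mu>"
  have "(\<Sum>v\<in>V. (?d v - ?l)\<^sup>2) = (\<Sum>v\<in>V. (?d v)\<^sup>2) - 2 * ?l * (\<Sum>v\<in>V. ?d v) + card V * ?l\<^sup>2"
    by (simp add: power2_diff sum.distrib sum_subtractf sum_distrib_left mult_ac)
  also have "\<dots> = (\<Sum>v\<in>V. (?d v)\<^sup>2) - 4 * (fsize V \<mu>)\<^sup>2 / card V"
    using assms unfolding sum_fdeg flambda_def by (simp add: field_simps power2_eq_square)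
  finally show ?thesis
    unfolding fsigma_def by simp
qed

lemma fsigma_le_iff_sum_fdeg_squared_le:
  assumes "finite V" "V \<noteq> {}" "fsize V \<mu> = fsize V \<mu>'"
  shows "fsigma V \<mu> \<le> fsigma V \<mu>' \<longleftrightarrow> (\<Sum>v\<in>V. (fdeg V \<mu> v)\<^sup>2) \<le> (\<Sum>v\<in>V. (fdeg V \<mu>' v)\<^sup>2)"
  using assms by (simp add: fsigma_eq divide_right_mono divide_le_cancel card_gt_0_iff)

lemma single_edge_fuzzy_graph_exists:
  assumes "finite V" "2 \<le> card V" "0 \<le> W" "W \<le> 1"
  obtains \<mu> where "fuzzy_graph V (\<lambda>_. 1) \<mu>" "single_edge V \<mu> W"
proof -
  obtain a b where ab: "a \<in> V" "b \<in> V" "a \<noteq> b"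
    using assms(1,2) card_le_Suc0_iff_eq[of V] by force
  define \<mu> where "\<mu> u v = (if {u, v} = {a, b} then W else 0)" for u v
  have "fuzzy_graph V (\<lambda>_. 1) \<mu>"
    unfolding fuzzy_graph_def \<mu>_def using assms(3,4) by (auto simp: insert_commute)
  moreover have "single_edge V \<mu> W"
    unfolding single_edge_def \<mu>_def using ab by auto
  ultimately show ?thesis
    using that by blast
qed

lemma sum_fdeg_squared_maximal_iff_single_edge:
  assumes "finite V" "2 \<le> card V" "0 \<le> W" "W \<le> 1" "fuzzy_graph V \<nu> \<mu>" "fsize V \<mu> = W"
  shows "(\<forall>\<nu>' \<mu>'. fuzzy_graph V \<nu>' \<mu>' \<and> fsize V \<mu>' = W \<longrightarrow>
            (\<Sum>v\<in>V. (fdeg V \<mu>' v)\<^sup>2) \<le> (\<Sum>v\<in>V. (fdeg V \<mu> v)\<^sup>2))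
         \<longleftrightarrow> single_edge V \<mu> W"
proof -
  have bound: "(\<Sum>v\<in>V. (fdeg V \<mu>' v)\<^sup>2) \<le> 2 * W\<^sup>2"
    if "fuzzy_graph V \<nu>' \<mu>'" "fsize V \<mu>' = W" for \<nu>' \<mu>'
    using sum_fdeg_squared_le[OF assms(1) fuzzy_graph_imp_weighted_graph[OF that(1)]] that(2)
    by simp
  have attained_iff: "(\<Sum>v\<in>V. (fdeg V \<mu> v)\<^sup>2) = 2 * W\<^sup>2 \<longleftrightarrow> single_edge V \<mu> W"
    using sum_fdeg_squared_eq_iff_single_edge[OF assms(1) fuzzy_graph_imp_weighted_graph[OF assms(5)]
        assms(2)] assms(6)
    by simp
  obtain \<mu>\<^sub>1 where \<mu>\<^sub>1: "fuzzy_graph V (\<lambda>_. 1) \<mu>\<^sub>1" "single_edge V \<mu>\<^sub>1 W"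
    using single_edge_fuzzy_graph_exists[OF assms(1-4)] .
  note \<mu>\<^sub>1_sums =
    single_edge_imp_sum_fdeg_squared[OF assms(1) fuzzy_graph_imp_weighted_graph[OF \<mu>\<^sub>1(1)] \<mu>\<^sub>1(2)]
  show ?thesis
  proof
    assume "\<forall>\<nu>' \<mu>'. fuzzy_graph V \<nu>' \<mu>' \<and> fsize V \<mu>' = W \<longrightarrow>
              (\<Sum>v\<in>V. (fdeg V \<mu>' v)\<^sup>2) \<le> (\<Sum>v\<in>V. (fdeg V \<mu> v)\<^sup>2)"
    then have "2 * W\<^sup>2 \<le> (\<Sum>v\<in>V. (fdeg V \<mu> v)\<^sup>2)"
      using \<mu>\<^sub>1(1) \<mu>\<^sub>1_sums by metis
    then show "single_edge V \<mu> W"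
      using bound[OF assms(5,6)] attained_iff by simp
  next
    assume "single_edge V \<mu> W"
    then show "\<forall>\<nu>' \<mu>'. fuzzy_graph V \<nu>' \<mu>' \<and> fsize V \<mu>' = W \<longrightarrow>
                 (\<Sum>v\<in>V. (fdeg V \<mu>' v)\<^sup>2) \<le> (\<Sum>v\<in>V. (fdeg V \<mu> v)\<^sup>2)"
      using bound attained_iff by auto
  qed
qed

theorem corollary3p3:
  fixes V :: "'a set" and n :: nat and W :: real
    and \<nu> :: "'a \<Rightarrow> real" and \<mu> :: "'a \<Rightarrow> 'a \<Rightarrow> real"
  assumes "finite V" and "card V = n" and "n \<ge> 2"
    and "0 \<le> W" and "W \<le> 1"
    and "fuzzy_graph V \<nu> \<mu>" and "fsize V \<mu> = W"
  shows "(\<forall>\<nu>' \<mu>'. fuzzy_graph V \<nu>' \<mu>' \<and> fsize V \<mu>' = W \<longrightarrow> fsigma V \<mu>' \<le> fsigma V \<mu>)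
         \<longleftrightarrow> single_edge V \<mu> W"
proof -
  have card: "2 \<le> card V" "V \<noteq> {}"
    using assms(2,3) by auto
  have "fsigma V \<mu>' \<le> fsigma V \<mu> \<longleftrightarrow>
      (\<Sum>v\<in>V. (fdeg V \<mu>' v)\<^sup>2) \<le> (\<Sum>v\<in>V. (fdeg V \<mu> v)\<^sup>2)" if "fsize V \<mu>' = W" for \<mu>'
    using fsigma_le_iff_sum_fdeg_squared_le[OF assms(1) card(2)] that assms(7) by simp
  then show ?thesis
    using sum_fdeg_squared_maximal_iff_single_edge[OF assms(1) card(1) assms(4-7)] by simp
qed

end
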